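(* Let $(y(n))_{n\ge1}$ be a sequence of positive reals and suppose it has Poissonian pair correlation in the sense that for every real-valued $g\in C_c^\infty(\mathbb{R})$, $$\lim_{N\to\infty}\frac1N\sum_{\substack{n_1,n_2\in[N]\\ n_1\neq n_2}}\sum_{k\in\mathbb{Z}} g\big(N(y(n_1)-y(n_2)+k)\big)=\int_{\mathbb{R}} g .$$ Let $f\in C_c^\infty(\mathbb{R})$ be real-valued and define $F(z_1,z_2):=\int_{\mathbb{R}} f(s)f(z_1+z_2+s)f(z_2+s)\,\mathrm{d}s$. Then $$\lim_{N\to\infty}\frac1N\sum^{*}_{\mathbf{n}\in[N]^3}\sum_{\mathbf{k}\in\mathbb{Z}^2}F\big(N(y(n_1)-y(n_2)+k_1),\,N(y(n_2)-y(n_3)+k_2)\big)=\Big(\int_{\mathbb{R}} f\Big)^3$$ holds if and only if $$\lim_{N\to\infty}\mathcal{M}^{(3)}(N)=\mathbf{E}(f)^3+3\,\mathbf{E}(f)\,\mathbf{E}(f^2)+\mathbf{E}(f^3).$$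
   Context: $[N]=\{1,\dots,N\}$; $\sum^*$ denotes summation over triples $\mathbf{n}=(n_1,n_2,n_3)$ with pairwise distinct entries. For $h$ integrable on $\mathbb{R}$, $\mathbf{E}(h):=\int_{\mathbb{R}}h(x)\,\mathrm{d}x$; so $\mathbf{E}(f^j)=\int_{\mathbb{R}} f(x)^j\,\mathrm{d}x$. Define $S_N(s):=\sum_{n\in[N]}\sum_{k\in\mathbb{Z}} f(N(y(n)+k+s))$ and $\mathcal{M}^{(3)}(N):=\int_0^1 S_N(s)^3\,\mathrm{d}s$. *)

theory Defs
  imports "HOL-Analysis.Analysis"
begin

definition smooth_cc :: "(real \<Rightarrow> real) \<Rightarrow> bool" where
  "smooth_cc g \<longleftrightarrow>
     (\<forall>k::nat. \<forall>x::real. ((deriv ^^ k) g) differentiable (at x)) \<and>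
     compact (closure {x. g x \<noteq> 0})"

definition Eint :: "(real \<Rightarrow> real) \<Rightarrow> real" where
  "Eint h = (LINT x|lborel. h x)"

definition pair_corr :: "(nat \<Rightarrow> real) \<Rightarrow> (real \<Rightarrow> real) \<Rightarrow> nat \<Rightarrow> real" where
  "pair_corr y g N = (1 / real N) *
     (\<Sum>n1\<in>{1..N}. \<Sum>n2\<in>{1..N} - {n1}.
        (\<Sum>\<^sub>\<infinity>k::int. g (real N * (y n1 - y n2 + real_of_int k))))"

definition triple_F :: "(real \<Rightarrow> real) \<Rightarrow> real \<Rightarrow> real \<Rightarrow> real" where
  "triple_F f z1 z2 = (LINT s|lborel. f s * f (z1 + z2 + s) * f (z2 + s))"

definition distinct_triples :: "nat \<Rightarrow> (nat \<times> nat \<times> nat) set" where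
  "distinct_triples N = {(n1, n2, n3). n1 \<in> {1..N} \<and> n2 \<in> {1..N} \<and> n3 \<in> {1..N} \<and>
       n1 \<noteq> n2 \<and> n1 \<noteq> n3 \<and> n2 \<noteq> n3}"

definition triple_corr :: "(nat \<Rightarrow> real) \<Rightarrow> (real \<Rightarrow> real) \<Rightarrow> nat \<Rightarrow> real" where
  "triple_corr y f N = (1 / real N) *
     (\<Sum>(n1, n2, n3)\<in>distinct_triples N.
        infsum (\<lambda>(k1::int, k2::int).
           triple_F f (real N * (y n1 - y n2 + real_of_int k1))
                      (real N * (y n2 - y n3 + real_of_int k2))) UNIV)"

definition S_N :: "(nat \<Rightarrow> real) \<Rightarrow> (real \<Rightarrow> real) \<Rightarrow> nat \<Rightarrow> real \<Rightarrow> real" where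
  "S_N y f N s = (\<Sum>n\<in>{1..N}. (\<Sum>\<^sub>\<infinity>k::int. f (real N * (y n + real_of_int k + s))))"

definition M3 :: "(nat \<Rightarrow> real) \<Rightarrow> (real \<Rightarrow> real) \<Rightarrow> nat \<Rightarrow> real" where
  "M3 y f N = (LINT s:{0..1}|lborel. (S_N y f N s) ^ 3)"

end

theory Submission
  imports Defs
begin

text \<open>Expanding the cube of S_N and integrating over one period turns M3(N) into 1/N times
  the sum, over all triples (n1, n2, n3) in [N]^3, of the lattice sums of F. If f vanishes outside
  [-R, R] and N > 2R, the triples with repeated entries collapse: n1 = n2 = n3 contributes E(f^3),
  and each of the three patterns with exactly two equal entries contributes the pair correlation
  of g(z) = F(z, 0) = \<integral> f(s)^2 f(z + s) ds. Since g is again smooth with compact support and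
  \<integral> g = E(f) E(f^2), the pair correlation hypothesis shows that M3(N) and the triple correlation
  differ by a sequence tending to 3 E(f) E(f^2) + E(f^3).\<close>

lemma integrable_continuous_bounded_support:
  fixes h :: "real \<Rightarrow> real"
  assumes "continuous_on UNIV h" "\<And>x. C < \<bar>x\<bar> \<Longrightarrow> h x = 0"
  shows "integrable lborel h"
proof -
  have "integrable lborel (\<lambda>x. indicator {-C..C} x *\<^sub>R h x)"
    by (rule borel_integrable_compact) (auto intro: continuous_on_subset[OF assms(1)])
  moreover have "(\<lambda>x. indicator {-C..C} x *\<^sub>R h x) = h"
    using assms(2) by (force simp: indicator_def abs_le_iff)
  ultimately show ?thesis by simp
qed

lemma abs_le_of_abs_mult_le:
  fixes c x :: real
  assumes "1 \<le> c" "\<bar>c * x\<bar> \<le> d"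
  shows "\<bar>x\<bar> \<le> d"
proof -
  have "\<bar>x\<bar> \<le> c * \<bar>x\<bar>" using assms(1) by (simp add: mult_le_cancel_right1)
  also have "\<dots> = \<bar>c * x\<bar>" using assms(1) by (simp add: abs_mult)
  finally show ?thesis using assms(2) by simp
qed

lemma le_abs_mult_of_int_nonzero:
  fixes c :: real
  assumes "0 \<le> c" "j \<noteq> 0"
  shows "c \<le> \<bar>c * of_int j\<bar>"
proof -
  have "1 \<le> \<bar>real_of_int j\<bar>" using assms(2) by linarith
  then have "c * 1 \<le> c * \<bar>real_of_int j\<bar>" using assms(1) by (intro mult_left_mono) auto
  then show ?thesis using assms(1) by (simp add: abs_mult)
qed

lemma infsum_int_eq_sum_Icc:
  fixes g :: "int \<Rightarrow> 'a::{comm_monoid_add, t2_space}"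
  assumes "\<And>k. k \<notin> {-B..B} \<Longrightarrow> g k = 0"
  shows "infsum g UNIV = sum g {-B..B}"
proof -
  have "infsum g UNIV = infsum g {-B..B}"
    by (rule infsum_cong_neutral) (use assms in auto)
  then show ?thesis by simp
qed

lemma infsum_reindex_range:
  assumes "inj e" "\<And>x. x \<notin> range e \<Longrightarrow> g x = 0"
  shows "infsum g UNIV = infsum (\<lambda>j. g (e j)) UNIV"
proof -
  have "infsum g UNIV = infsum g (range e)"
    by (rule infsum_cong_neutral) (use assms in auto)
  also have "\<dots> = infsum (\<lambda>j. g (e j)) UNIV"
    by (rule infsum_reindex_bij_betw[symmetric]) (use assms(1) in \<open>simp add: bij_betw_def\<close>)
  finally show ?thesis .
qed

lemma tendsto_add_convergent_iff:
  fixes a b :: "'a \<Rightarrow> 'b::topological_group_add"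
  assumes "(b \<longlongrightarrow> B) F"
  shows "((\<lambda>n. a n + b n) \<longlongrightarrow> A + B) F \<longleftrightarrow> (a \<longlongrightarrow> A) F"
proof
  assume "((\<lambda>n. a n + b n) \<longlongrightarrow> A + B) F"
  from tendsto_diff[OF this assms] show "(a \<longlongrightarrow> A) F" by simp
qed (intro tendsto_add assms)

lemma set_integral_power3_sum:
  fixes h :: "'i \<Rightarrow> 'a \<Rightarrow> real"
  assumes "finite I" "\<And>i j k. set_integrable M A (\<lambda>s. h i s * h j s * h k s)"
  shows "(LINT s:A|M. (\<Sum>i\<in>I. h i s) ^ 3)
    = (\<Sum>i\<in>I. \<Sum>j\<in>I. \<Sum>k\<in>I. LINT s:A|M. h i s * h j s * h k s)"
proof -
  define H where "H p s = (case p of (i, j, k) \<Rightarrow> h i s * h j s * h k s)" for p s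
  have cube: "(\<Sum>i\<in>I. h i s) ^ 3 = (\<Sum>p\<in>I \<times> I \<times> I. H p s)" for s
  proof -
    have "(\<Sum>i\<in>I. h i s) ^ 3 = (\<Sum>i\<in>I. \<Sum>j\<in>I. h i s * h j s) * (\<Sum>k\<in>I. h k s)"
      by (simp add: power3_eq_cube sum_product)
    also have "\<dots> = (\<Sum>i\<in>I. \<Sum>j\<in>I. \<Sum>k\<in>I. h i s * h j s * h k s)"
      by (simp only: sum_distrib_right) (simp only: sum_distrib_left)
    finally show ?thesis by (simp add: sum.cartesian_product H_def)
  qed
  have "(LINT s:A|M. (\<Sum>i\<in>I. h i s) ^ 3) = (\<Sum>p\<in>I \<times> I \<times> I. LINT s|M. indicator A s *\<^sub>R H p s)"
    unfolding cube set_lebesgue_integral_def scaleR_sum_right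
    by (rule Bochner_Integration.integral_sum)
       (use assms(2) in \<open>auto simp: set_integrable_def H_def\<close>)
  also have "\<dots> = (\<Sum>i\<in>I. \<Sum>j\<in>I. \<Sum>k\<in>I. LINT s|M. indicator A s *\<^sub>R H (i, j, k) s)"
    by (simp add: sum.cartesian_product)
  finally show ?thesis by (simp add: H_def set_lebesgue_integral_def)
qed

lemma integral_eq_sum_unit_intervals:
  fixes u :: "real \<Rightarrow> real" and C :: real and M :: int
  assumes u: "integrable lborel u" and supp: "\<And>x. C < \<bar>x\<bar> \<Longrightarrow> u x = 0" and M: "C \<le> M"
  shows "(LINT x|lborel. u x)
    = (\<Sum>k\<in>{-M..M}. LINT x|lborel. indicator {of_int k..<of_int k + 1} x * u x)"
proof -
  have pointwise: "u x = (\<Sum>k\<in>{-M..M}. indicator {of_int k..<of_int k + 1} x * u x)" for x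
  proof -
    have "indicator {of_int k..<of_int k + 1} x = (if k = \<lfloor>x\<rfloor> then 1 else (0::real))" for k
      using floor_eq_iff[of x k] by (auto simp: indicator_def)
    then have "(\<Sum>k\<in>{-M..M}. indicator {of_int k..<of_int k + 1} x * u x)
        = (if \<lfloor>x\<rfloor> \<in> {-M..M} then u x else 0)"
      by (simp add: sum.delta' flip: sum_distrib_right)
    moreover have "u x = 0" if "\<lfloor>x\<rfloor> \<notin> {-M..M}"
      using that M by (intro supp) (auto simp: floor_le_iff le_floor_iff)
    ultimately show ?thesis by auto
  qed
  have "(LINT x|lborel. u x)
      = (LINT x|lborel. (\<Sum>k\<in>{-M..M}. indicator {of_int k..<of_int k + 1} x * u x))"
    by (rule Bochner_Integration.integral_cong[OF refl pointwise])
  also have "\<dots> = (\<Sum>k\<in>{-M..M}. LINT x|lborel. indicator {of_int k..<of_int k + 1} x * u x)"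
    by (rule Bochner_Integration.integral_sum) (use integrable_mult_indicator[OF _ u] in auto)
  finally show ?thesis .
qed

lemma set_integral_periodization:
  fixes u :: "real \<Rightarrow> real"
  assumes u: "integrable lborel u" and supp: "\<And>x. C < \<bar>x\<bar> \<Longrightarrow> u x = 0"
  shows "(LINT s:{0..1}|lborel. \<Sum>\<^sub>\<infinity>k::int. u (s + of_int k)) = (LINT x|lborel. u x)"
proof -
  obtain M :: int where M: "C + 1 \<le> M"
    by (metis ceiling_le_iff order_refl)
  have [measurable]: "u \<in> borel_measurable lborel"
    using u by simp
  have shift_integrable: "integrable lborel (\<lambda>s. u (s + of_int k))" for k
    using lborel_integrable_real_affine[OF u, of 1 "of_int k"] by (simp add: add.commute)
  have finite_sum: "(\<Sum>\<^sub>\<infinity>k::int. u (s + of_int k)) = (\<Sum>k\<in>{-M..M}. u (s + of_int k))"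
    if "s \<in> {0..1}" for s
    by (rule infsum_int_eq_sum_Icc, rule supp) (use that M in auto)
  have "(LINT s:{0..1}|lborel. \<Sum>\<^sub>\<infinity>k::int. u (s + of_int k))
      = (LINT s:{0..1}|lborel. (\<Sum>k\<in>{-M..M}. u (s + of_int k)))"
    by (rule set_lebesgue_integral_cong) (auto simp: finite_sum)
  also have "\<dots> = (LINT s|lborel. (\<Sum>k\<in>{-M..M}. indicator {0..<1} s * u (s + of_int k)))"
    unfolding set_lebesgue_integral_def
  proof (rule integral_cong_AE)
    show "AE s in lborel. indicator {0..1} s *\<^sub>R (\<Sum>k\<in>{-M..M}. u (s + of_int k))
        = (\<Sum>k\<in>{-M..M}. indicator {0..<1} s * u (s + of_int k))"
      using AE_lborel_singleton[of 1]
      by eventually_elim (auto simp: indicator_def)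
  qed auto
  also have "\<dots> = (\<Sum>k\<in>{-M..M}. LINT s|lborel. indicator {0..<1} s * u (s + of_int k))"
    by (rule Bochner_Integration.integral_sum)
       (use integrable_mult_indicator[OF _ shift_integrable] in auto)
  also have "\<dots> = (\<Sum>k\<in>{-M..M}. LINT x|lborel. indicator {of_int k..<of_int k + 1} x * u x)"
  proof (rule sum.cong[OF refl])
    fix k :: int
    have "(LINT x|lborel. indicator {of_int k..<of_int k + 1} x * u x)
        = (LINT s|lborel. indicator {of_int k..<of_int k + 1} (of_int k + 1 * s) * u (of_int k + 1 * s))"
      using lborel_integral_real_affine[of 1 _ "of_int k"] by simp
    also have "\<dots> = (LINT s|lborel. indicator {0..<1} s * u (s + of_int k))"
      by (intro Bochner_Integration.integral_cong) (auto simp: indicator_def add.commute)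
    finally show "(LINT s|lborel. indicator {0..<1} s * u (s + of_int k))
        = (LINT x|lborel. indicator {of_int k..<of_int k + 1} x * u x)" ..
  qed
  also have "\<dots> = (LINT x|lborel. u x)"
  proof -
    have "C \<le> of_int M"
      using M by linarith
    from integral_eq_sum_unit_intervals[OF u supp this] show ?thesis
      by simp
  qed
  finally show ?thesis .
qed

lemma sum_Diff_singleton_eq_sum_if:
  assumes "finite A"
  shows "(\<Sum>b\<in>A - {a}. h b) = (\<Sum>b\<in>A. if a \<noteq> b then h b else 0)"
proof -
  have "A - {a} = {b \<in> A. a \<noteq> b}"
    by auto
  then show ?thesis
    using assms by (simp add: sum.inter_filter)
qed

lemma sum_distinct_triples_eq_sum_if:
  assumes "finite A"
  shows "(\<Sum>(a, b, c)\<in>{(a, b, c). a \<in> A \<and> b \<in> A \<and> c \<in> A \<and> a \<noteq> b \<and> a \<noteq> c \<and> b \<noteq> c}. q a b c)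
    = (\<Sum>a\<in>A. \<Sum>b\<in>A. \<Sum>c\<in>A. if a \<noteq> b \<and> a \<noteq> c \<and> b \<noteq> c then q a b c else 0)"
proof -
  have "{(a, b, c). a \<in> A \<and> b \<in> A \<and> c \<in> A \<and> a \<noteq> b \<and> a \<noteq> c \<and> b \<noteq> c}
      = {p \<in> A \<times> A \<times> A. case p of (a, b, c) \<Rightarrow> a \<noteq> b \<and> a \<noteq> c \<and> b \<noteq> c}"
    by auto
  then show ?thesis
    using assms by (simp add: sum.inter_filter sum.cartesian_product case_prod_beta)
qed

lemma sum_cube_split_coincidences:
  fixes q :: "'a \<Rightarrow> 'a \<Rightarrow> 'a \<Rightarrow> real" and X :: "'a \<Rightarrow> 'a \<Rightarrow> real"
  assumes A: "finite A"
    and diag: "\<And>a. q a a a = e"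
    and q12: "\<And>a c. a \<noteq> c \<Longrightarrow> q a a c = X c a"
    and q23: "\<And>a c. a \<noteq> c \<Longrightarrow> q c a a = X c a"
    and q13: "\<And>a c. a \<noteq> c \<Longrightarrow> q c a c = X a c"
  shows "(\<Sum>a\<in>A. \<Sum>b\<in>A. \<Sum>c\<in>A. q a b c)
    = (\<Sum>(a, b, c)\<in>{(a, b, c). a \<in> A \<and> b \<in> A \<and> c \<in> A \<and> a \<noteq> b \<and> a \<noteq> c \<and> b \<noteq> c}. q a b c)
      + 3 * (\<Sum>a\<in>A. \<Sum>b\<in>A - {a}. X a b) + of_nat (card A) * e"
proof -
  define W where "W = (\<Sum>a\<in>A. \<Sum>b\<in>A. if a \<noteq> b then X a b else 0)"
  have W_swap: "W = (\<Sum>a\<in>A. \<Sum>b\<in>A. if a \<noteq> b then X b a else 0)"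
    unfolding W_def by (subst sum.swap) (intro sum.cong refl, auto)
  have split: "q a b c =
      (if a \<noteq> b \<and> a \<noteq> c \<and> b \<noteq> c then q a b c else 0)
    + (if a = b \<and> a \<noteq> c then X c a else 0)
    + (if b = c \<and> a \<noteq> b then X a b else 0)
    + (if a = c \<and> a \<noteq> b then X b a else 0)
    + (if b = c \<and> a = b then e else 0)" for a b c
    by (cases "a = b"; cases "b = c"; cases "a = c") (simp_all add: diag q12 q23 q13)
  have pick: "(\<Sum>c\<in>A. if b = c \<and> P then h c else 0) = (if P then h b else 0)"
    if "b \<in> A" for b P and h :: "'a \<Rightarrow> real"
    using A that by (simp add: if_if_eq_conj[symmetric] sum.delta')
  have "(\<Sum>a\<in>A. \<Sum>b\<in>A. \<Sum>c\<in>A. if a = b \<and> a \<noteq> c then X c a else 0)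
      = (\<Sum>a\<in>A. \<Sum>b\<in>A. if a = b then (\<Sum>c\<in>A. if a \<noteq> c then X c a else 0) else 0)"
    by (intro sum.cong refl) auto
  also have "\<dots> = W"
    unfolding W_swap using A by (simp add: sum.delta')
  finally have "(\<Sum>a\<in>A. \<Sum>b\<in>A. \<Sum>c\<in>A. if a = b \<and> a \<noteq> c then X c a else 0) = W" .
  moreover have "(\<Sum>a\<in>A. \<Sum>b\<in>A. \<Sum>c\<in>A. if b = c \<and> a \<noteq> b then X a b else 0) = W"
    unfolding W_def using A by (simp add: pick)
  moreover have "(\<Sum>a\<in>A. \<Sum>b\<in>A. \<Sum>c\<in>A. if a = c \<and> a \<noteq> b then X b a else 0) = W"
    unfolding W_swap using A by (simp add: pick)
  moreover have "(\<Sum>a\<in>A. \<Sum>b\<in>A. \<Sum>c\<in>A. if b = c \<and> a = b then e else 0) = of_nat (card A) * e"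
    using A by (simp add: pick sum.delta')
  moreover have "W = (\<Sum>a\<in>A. \<Sum>b\<in>A - {a}. X a b)"
    unfolding W_def using A by (simp add: sum_Diff_singleton_eq_sum_if)
  ultimately show ?thesis
    using A by (subst split) (simp only: sum.distrib sum_distinct_triples_eq_sum_if)
qed

lemma integral_lborel_eq_integral_cbox:
  fixes v :: "real \<Rightarrow> real"
  assumes v: "continuous_on UNIV v" and supp: "\<And>s. R < \<bar>s\<bar> \<Longrightarrow> v s = 0"
  shows "(LINT s|lborel. v s) = integral (cbox (-R) R) v"
proof -
  have "(LINT s|lborel. v s) = integral UNIV v"
    by (rule integral_lborel[symmetric], rule integrable_continuous_bounded_support[OF v supp])
  also have "\<dots> = integral UNIV (\<lambda>s. if s \<in> cbox (-R) R then v s else 0)"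
  proof (intro arg_cong[where f="integral UNIV"] ext)
    fix s
    show "v s = (if s \<in> cbox (-R) R then v s else 0)"
      using supp[of s] by (cases "R < \<bar>s\<bar>") (auto simp: abs_le_iff)
  qed
  also have "\<dots> = integral (cbox (-R) R) v"
    by (rule integral_restrict_UNIV)
  finally show ?thesis .
qed

lemma integral_shift_has_field_derivative:
  fixes w h h' :: "real \<Rightarrow> real"
  assumes w: "continuous_on UNIV w" and w_supp: "\<And>s. R < \<bar>s\<bar> \<Longrightarrow> w s = 0"
    and h: "\<And>x. (h has_field_derivative h' x) (at x)" and h': "continuous_on UNIV h'"
  shows "((\<lambda>z. LINT s|lborel. w s * h (z + s)) has_field_derivative
           (LINT s|lborel. w s * h' (z + s))) (at z)"
proof -
  have "continuous_on UNIV h"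
    using h by (intro continuous_at_imp_continuous_on) (auto intro: DERIV_isCont)
  then have [continuous_intros]: "continuous_on S k \<Longrightarrow> continuous_on S (\<lambda>x. h (k x))"
    and [continuous_intros]: "continuous_on S k \<Longrightarrow> continuous_on S (\<lambda>x. h' (k x))"
    and [continuous_intros]: "continuous_on S k \<Longrightarrow> continuous_on S (\<lambda>x. w (k x))"
    for S and k :: "'a::topological_space \<Rightarrow> real"
    using h' w by (auto intro: continuous_on_compose2)
  have on_cbox: "(LINT s|lborel. w s * k (z + s)) = integral (cbox (-R) R) (\<lambda>s. w s * k (z + s))"
    if "continuous_on UNIV k" for k z
    by (rule integral_lborel_eq_integral_cbox)
       (auto intro!: continuous_intros continuous_on_compose2[OF that] simp: w_supp)
  have "((\<lambda>z. integral (cbox (-R) R) (\<lambda>s. w s * h (z + s))) has_field_derivative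
          integral (cbox (-R) R) (\<lambda>s. w s * h' (z + s))) (at z within UNIV)"
  proof (rule leibniz_rule_field_derivative)
    fix x t :: real
    have "((\<lambda>x. h (x + t)) has_field_derivative h' (x + t)) (at x)"
      using h[of "x + t"] DERIV_shift by blast
    then show "((\<lambda>x. w t * h (x + t)) has_field_derivative w t * h' (x + t)) (at x within UNIV)"
      by (simp add: DERIV_cmult)
  next
    have "continuous_on UNIV (\<lambda>p::real \<times> real. w (snd p) * h' (fst p + snd p))"
      by (intro continuous_intros)
    then show "continuous_on (UNIV \<times> cbox (-R) R) (\<lambda>(x, t). w t * h' (x + t))"
      by (rule continuous_on_subset[THEN continuous_on_cong[THEN iffD1, rotated -1]]) auto
  qed (auto intro!: integrable_continuous_real continuous_intros)
  then show ?thesis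
    using on_cbox[OF \<open>continuous_on UNIV h\<close>] on_cbox[OF h'] by simp
qed

lemma higher_deriv_integral_shift:
  fixes w h :: "real \<Rightarrow> real"
  assumes w: "continuous_on UNIV w" and w_supp: "\<And>s. R < \<bar>s\<bar> \<Longrightarrow> w s = 0"
    and smooth: "\<And>k x. ((deriv ^^ k) h) differentiable (at x)"
  shows "(deriv ^^ k) (\<lambda>z. LINT s|lborel. w s * h (z + s))
    = (\<lambda>z. LINT s|lborel. w s * (deriv ^^ k) h (z + s))"
    and "((deriv ^^ k) (\<lambda>z. LINT s|lborel. w s * h (z + s))) differentiable (at z)"
proof -
  have step: "((\<lambda>z. LINT s|lborel. w s * (deriv ^^ k) h (z + s)) has_field_derivative
      (LINT s|lborel. w s * (deriv ^^ Suc k) h (z + s))) (at z)" for k z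
  proof (rule integral_shift_has_field_derivative[OF w w_supp])
    show "((deriv ^^ k) h has_field_derivative (deriv ^^ Suc k) h x) (at x)" for x
      using smooth DERIV_deriv_iff_real_differentiable by force
    show "continuous_on UNIV ((deriv ^^ Suc k) h)"
      by (intro continuous_at_imp_continuous_on ballI differentiable_imp_continuous_within smooth)
  qed
  show eq: "(deriv ^^ k) (\<lambda>z. LINT s|lborel. w s * h (z + s))
      = (\<lambda>z. LINT s|lborel. w s * (deriv ^^ k) h (z + s))" for k
  proof (induction k)
    case (Suc k)
    then show ?case
      using step DERIV_imp_deriv by fastforce
  qed simp
  show "((deriv ^^ k) (\<lambda>z. LINT s|lborel. w s * h (z + s))) differentiable (at z)"
    unfolding eq using step real_differentiable_def by blast
qed

lemma integral_integral_shift_product: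
  fixes w h :: "real \<Rightarrow> real"
  assumes w: "continuous_on UNIV w" and w_supp: "\<And>s. R < \<bar>s\<bar> \<Longrightarrow> w s = 0"
    and h: "continuous_on UNIV h" and h_supp: "\<And>x. R < \<bar>x\<bar> \<Longrightarrow> h x = 0"
  shows "(LINT z|lborel. LINT s|lborel. w s * h (z + s)) = (LINT s|lborel. w s) * (LINT x|lborel. h x)"
proof -
  let ?S = "{-R..R} \<times> {-2*R..2*R}"
  let ?v = "\<lambda>(s, z). w s * h (z + s)"
  have "integrable lborel (\<lambda>p. indicator ?S p *\<^sub>R ?v p)"
  proof (rule borel_integrable_compact)
    have "continuous_on UNIV (\<lambda>p::real \<times> real. w (fst p) * h (snd p + fst p))"
      by (intro continuous_intros continuous_on_compose2[OF w] continuous_on_compose2[OF h]) auto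
    then show "continuous_on ?S ?v"
      by (rule continuous_on_subset[THEN continuous_on_cong[THEN iffD1, rotated -1]]) auto
  qed (intro compact_Times compact_Icc)
  moreover have "(\<lambda>p. indicator ?S p *\<^sub>R ?v p) = ?v"
  proof (rule ext)
    fix p
    show "indicator ?S p *\<^sub>R ?v p = ?v p"
    proof (cases "?v p = 0")
      case False
      obtain s z where p: "p = (s, z)"
        by force
      with False have "w s \<noteq> 0" "h (z + s) \<noteq> 0"
        by auto
      then have "\<bar>s\<bar> \<le> R" "\<bar>z + s\<bar> \<le> R"
        using w_supp h_supp by (meson not_le)+
      then have "p \<in> ?S"
        by (auto simp: p abs_le_iff)
      then show ?thesis by simp
    qed simp
  qed
  ultimately have "integrable (lborel \<Otimes>\<^sub>M lborel) ?v"
    unfolding lborel_prod by simp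
  then have "(LINT z|lborel. LINT s|lborel. w s * h (z + s)) = (LINT s|lborel. LINT z|lborel. w s * h (z + s))"
    by (rule lborel_pair.Fubini_integral)
  also have "\<dots> = (LINT s|lborel. w s * (LINT x|lborel. h x))"
  proof -
    have "(LINT z|lborel. h (z + s)) = (LINT x|lborel. h x)" for s
      using lborel_integral_real_affine[of 1 h s] by (simp add: add.commute)
    then show ?thesis by simp
  qed
  finally show ?thesis by simp
qed

locale compactly_supported =
  fixes f :: "real \<Rightarrow> real" and R :: real
  assumes continuous: "continuous_on UNIV f" and support: "\<And>x. R < \<bar>x\<bar> \<Longrightarrow> f x = 0"
begin

lemma nonzero_imp_abs_le: "f x \<noteq> 0 \<Longrightarrow> \<bar>x\<bar> \<le> R"
  using support by force

lemma scaled_support: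
  assumes "1 \<le> N" "R < \<bar>x\<bar>"
  shows "f (real N * x) = 0"
proof -
  have "1 \<le> real N"
    using assms(1) by simp
  then have "R < \<bar>real N * x\<bar>"
    using abs_le_of_abs_mult_le assms(2) by (meson not_le)
  then show ?thesis
    by (rule support)
qed

lemma continuous_on_compose_f [continuous_intros]:
  "continuous_on S g \<Longrightarrow> continuous_on S (\<lambda>x. f (g x))"
  by (rule continuous_on_compose2[OF continuous]) auto

lemma triple_F_nonzero_imp:
  assumes "triple_F f z1 z2 \<noteq> 0"
  shows "\<bar>z1\<bar> \<le> 2 * R \<and> \<bar>z2\<bar> \<le> 2 * R \<and> \<bar>z1 + z2\<bar> \<le> 2 * R"
proof -
  have "\<exists>s. f s * f (z1 + z2 + s) * f (z2 + s) \<noteq> 0"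
  proof (rule ccontr)
    assume "\<nexists>s. f s * f (z1 + z2 + s) * f (z2 + s) \<noteq> 0"
    then have "(\<lambda>s. f s * f (z1 + z2 + s) * f (z2 + s)) = (\<lambda>s. 0)"
      by auto
    then show False
      using assms unfolding triple_F_def by simp
  qed
  then obtain s where "f s * f (z1 + z2 + s) * f (z2 + s) \<noteq> 0" ..
  then have "\<bar>s\<bar> \<le> R" "\<bar>z1 + z2 + s\<bar> \<le> R" "\<bar>z2 + s\<bar> \<le> R"
    using nonzero_imp_abs_le by auto
  then show ?thesis by linarith
qed

definition wrap :: "nat \<Rightarrow> real \<Rightarrow> real \<Rightarrow> real" where
  "wrap N b s = (\<Sum>\<^sub>\<infinity>k::int. f (real N * (b + of_int k + s)))"

lemma S_N_eq_sum_wrap: "S_N y f N s = (\<Sum>n\<in>{1..N}. wrap N (y n) s)"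
  unfolding S_N_def wrap_def ..

lemma wrap_eq_sum_Icc:
  assumes "1 \<le> N" "\<bar>b\<bar> + \<bar>s\<bar> + R \<le> of_int B"
  shows "wrap N b s = (\<Sum>k\<in>{-B..B}. f (real N * (b + of_int k + s)))"
  unfolding wrap_def
proof (rule infsum_int_eq_sum_Icc)
  fix k :: int
  assume "k \<notin> {-B..B}"
  then have "B < \<bar>k\<bar>"
    by auto
  then have "of_int B < \<bar>of_int k :: real\<bar>"
    by (metis of_int_abs of_int_less_iff)
  then have "R < \<bar>b + of_int k + s\<bar>"
    using assms(2) by arith
  then show "f (real N * (b + of_int k + s)) = 0"
    by (rule scaled_support[OF assms(1)])
qed

lemma wrap_shift: "wrap N b (s + of_int j) = wrap N b s"
proof -
  have "wrap N b s = (\<Sum>\<^sub>\<infinity>k::int. f (real N * (b + of_int (k + j) + s)))"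
    unfolding wrap_def
    by (rule infsum_reindex_bij_betw[where g="\<lambda>k. k + j", symmetric])
       (rule bij_betwI[where g="\<lambda>k. k - j"], auto)
  then show ?thesis
    unfolding wrap_def by (simp add: algebra_simps)
qed

lemma continuous_on_wrap:
  assumes "1 \<le> N"
  shows "continuous_on UNIV (wrap N b)"
proof -
  have "isCont (wrap N b) x" for x
  proof -
    define B where "B = \<lceil>\<bar>b\<bar> + \<bar>x\<bar> + 1 + R\<rceil>"
    let ?P = "\<lambda>s. \<Sum>k\<in>{-B..B}. f (real N * (b + of_int k + s))"
    have "continuous_on (ball x 1) ?P"
      by (intro continuous_intros)
    moreover have local_sum: "wrap N b s = ?P s" if "s \<in> ball x 1" for s
    proof (rule wrap_eq_sum_Icc[OF assms])
      have "\<bar>s\<bar> \<le> \<bar>x\<bar> + 1"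
        using that abs_triangle_ineq2[of s x] by (simp add: dist_real_def abs_minus_commute)
      then show "\<bar>b\<bar> + \<bar>s\<bar> + R \<le> of_int B"
        unfolding B_def using le_of_int_ceiling[of "\<bar>b\<bar> + \<bar>x\<bar> + 1 + R"] by linarith
    qed
    ultimately have "continuous_on (ball x 1) (wrap N b)"
      by (subst continuous_on_cong[OF refl local_sum])
    then show ?thesis
      using continuous_on_eq_continuous_at[OF open_ball, of x 1 "wrap N b"] by simp
  qed
  then show ?thesis
    by (simp add: continuous_at_imp_continuous_on)
qed

lemma integral_triple_product_scaled:
  assumes "1 \<le> N"
  shows "(LINT s|lborel. f (real N * (b1 + of_int k1 + s)) * f (real N * (b2 + of_int k2 + s))
            * f (real N * (b3 + s)))
    = triple_F f (real N * (b1 - b2 + of_int (k1 - k2))) (real N * (b2 - b3 + of_int k2)) / real N"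
proof -
  define z1 where "z1 = real N * (b1 - b2 + of_int (k1 - k2))"
  define z2 where "z2 = real N * (b2 - b3 + of_int k2)"
  have N: "real N \<noteq> 0"
    using assms by simp
  have "triple_F f z1 z2 = \<bar>real N\<bar> *\<^sub>R (LINT s|lborel. f (real N * b3 + real N * s)
      * f (z1 + z2 + (real N * b3 + real N * s)) * f (z2 + (real N * b3 + real N * s)))"
    unfolding triple_F_def by (rule lborel_integral_real_affine[OF N])
  also have "\<dots> = real N * (LINT s|lborel. f (real N * (b1 + of_int k1 + s))
      * f (real N * (b2 + of_int k2 + s)) * f (real N * (b3 + s)))"
  proof -
    have "z1 + z2 + (real N * b3 + real N * s) = real N * (b1 + of_int k1 + s)"
      and "z2 + (real N * b3 + real N * s) = real N * (b2 + of_int k2 + s)"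
      and "real N * b3 + real N * s = real N * (b3 + s)" for s
      unfolding z1_def z2_def by (simp_all add: algebra_simps)
    then show ?thesis by (simp add: mult_ac)
  qed
  finally show ?thesis
    using N unfolding z1_def z2_def by simp
qed

definition triple_sum :: "nat \<Rightarrow> real \<Rightarrow> real \<Rightarrow> real \<Rightarrow> real" where
  "triple_sum N b1 b2 b3 = infsum (\<lambda>(k1::int, k2::int).
     triple_F f (real N * (b1 - b2 + of_int k1)) (real N * (b2 - b3 + of_int k2))) UNIV"

lemma triple_sum_eq_sum_Icc:
  assumes N: "1 \<le> N" and B: "\<bar>b1\<bar> + \<bar>b2\<bar> + \<bar>b3\<bar> + 2 * R \<le> of_int B"
  shows "triple_sum N b1 b2 b3 = (\<Sum>k1\<in>{-B..B}. \<Sum>k2\<in>{-B..B}.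
     triple_F f (real N * (b1 - b2 + of_int (k1 - k2))) (real N * (b2 - b3 + of_int k2)))"
proof -
  define F where "F = (\<lambda>(k1::int, k2::int).
    triple_F f (real N * (b1 - b2 + of_int k1)) (real N * (b2 - b3 + of_int k2)))"
  define G where "G k = triple_F f (real N * (b1 - b2 + of_int (fst k - snd k)))
    (real N * (b2 - b3 + of_int (snd k)))" for k :: "int \<times> int"
  have "triple_sum N b1 b2 b3 = infsum (\<lambda>k. F (fst k - snd k, snd k)) UNIV"
    unfolding triple_sum_def F_def[symmetric]
    by (rule infsum_reindex_bij_betw[symmetric])
       (rule bij_betwI[where g="\<lambda>(j1, j2). (j1 + j2, j2)"], auto)
  also have "(\<lambda>k. F (fst k - snd k, snd k)) = G"
    unfolding F_def G_def by simp
  finally have "triple_sum N b1 b2 b3 = infsum G UNIV" .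
  also have "\<dots> = infsum G ({-B..B} \<times> {-B..B})"
  proof (rule infsum_cong_neutral)
    fix k assume "k \<in> UNIV - {-B..B} \<times> {-B..B}"
    then have k: "fst k \<notin> {-B..B} \<or> snd k \<notin> {-B..B}"
      by (auto simp: mem_Times_iff)
    show "G k = 0"
    proof (rule ccontr)
      assume "G k \<noteq> 0"
      then have "\<bar>real N * (b1 - b2 + of_int (fst k - snd k)) + real N * (b2 - b3 + of_int (snd k))\<bar> \<le> 2 * R"
        and "\<bar>real N * (b2 - b3 + of_int (snd k))\<bar> \<le> 2 * R"
        using triple_F_nonzero_imp unfolding G_def by blast+
      moreover have "real N * (b1 - b2 + of_int (fst k - snd k)) + real N * (b2 - b3 + of_int (snd k))
          = real N * (b1 - b3 + of_int (fst k))"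
        by (simp add: algebra_simps)
      moreover have "1 \<le> real N"
        using N by simp
      ultimately have "\<bar>b1 - b3 + of_int (fst k)\<bar> \<le> 2 * R" "\<bar>b2 - b3 + of_int (snd k)\<bar> \<le> 2 * R"
        by (metis abs_le_of_abs_mult_le)+
      then show False
        using k B by auto
    qed
  qed auto
  also have "\<dots> = (\<Sum>k1\<in>{-B..B}. \<Sum>k2\<in>{-B..B}. G (k1, k2))"
    by (simp add: sum.cartesian_product)
  finally show ?thesis
    unfolding G_def by simp
qed

lemma integral_wrap_wrap_scaled:
  assumes N: "1 \<le> N"
  shows "(LINT t|lborel. wrap N b1 t * wrap N b2 t * f (real N * (b3 + t)))
    = triple_sum N b1 b2 b3 / real N"
proof -
  define B where "B = \<lceil>\<bar>b1\<bar> + \<bar>b2\<bar> + \<bar>b3\<bar> + 2 * R\<rceil>"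
  have B: "\<bar>b1\<bar> + \<bar>b2\<bar> + \<bar>b3\<bar> + 2 * R \<le> of_int B"
    unfolding B_def by (rule le_of_int_ceiling)
  let ?K = "{-B..B}"
  define h where "h k1 k2 t = f (real N * (b1 + of_int k1 + t)) * f (real N * (b2 + of_int k2 + t))
    * f (real N * (b3 + t))" for k1 k2 :: int and t
  have h_integrable: "integrable lborel (h k1 k2)" for k1 k2
  proof (rule integrable_continuous_bounded_support[where C="\<bar>b3\<bar> + R"])
    show "continuous_on UNIV (h k1 k2)"
      unfolding h_def by (intro continuous_intros)
    show "h k1 k2 t = 0" if "\<bar>b3\<bar> + R < \<bar>t\<bar>" for t
      using scaled_support[OF N, of "b3 + t"] that unfolding h_def by simp
  qed
  have pointwise: "wrap N b1 t * wrap N b2 t * f (real N * (b3 + t)) = (\<Sum>k1\<in>?K. \<Sum>k2\<in>?K. h k1 k2 t)"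
    for t
  proof (cases "f (real N * (b3 + t)) = 0")
    case False
    then have "\<bar>t\<bar> \<le> \<bar>b3\<bar> + R"
      using scaled_support[OF N, of "b3 + t"] by linarith
    then have "wrap N b t = (\<Sum>k\<in>?K. f (real N * (b + of_int k + t)))" if "b \<in> {b1, b2}" for b
      using that B by (intro wrap_eq_sum_Icc[OF N]) auto
    then have "wrap N b1 t * wrap N b2 t = (\<Sum>k1\<in>?K. \<Sum>k2\<in>?K.
        f (real N * (b1 + of_int k1 + t)) * f (real N * (b2 + of_int k2 + t)))"
      by (simp add: sum_product)
    then show ?thesis
      unfolding h_def by (simp add: sum_distrib_right)
  qed (simp add: h_def)
  have "(LINT t|lborel. wrap N b1 t * wrap N b2 t * f (real N * (b3 + t)))
      = (LINT t|lborel. (\<Sum>k1\<in>?K. \<Sum>k2\<in>?K. h k1 k2 t))"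
    by (rule Bochner_Integration.integral_cong[OF refl pointwise])
  also have "\<dots> = (\<Sum>k1\<in>?K. \<Sum>k2\<in>?K. LINT t|lborel. h k1 k2 t)"
    by (simp add: Bochner_Integration.integral_sum Bochner_Integration.integrable_sum h_integrable)
  also have "\<dots> = (\<Sum>k1\<in>?K. \<Sum>k2\<in>?K.
      triple_F f (real N * (b1 - b2 + of_int (k1 - k2))) (real N * (b2 - b3 + of_int k2)) / real N)"
    unfolding h_def by (simp add: integral_triple_product_scaled[OF N])
  also have "\<dots> = triple_sum N b1 b2 b3 / real N"
    by (simp add: triple_sum_eq_sum_Icc[OF N B] sum_divide_distrib)
  finally show ?thesis .
qed

text \<open>The first two factors are 1-periodic, so they can be moved inside the lattice sum
  defining the third; this exhibits the product as a periodisation.\<close>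

lemma wrap_product_eq_infsum:
  "wrap N b1 s * wrap N b2 s * wrap N b3 s
    = (\<Sum>\<^sub>\<infinity>k::int. wrap N b1 (s + of_int k) * wrap N b2 (s + of_int k) * f (real N * (b3 + (s + of_int k))))"
  unfolding wrap_shift wrap_def[of N b3] by (simp add: infsum_cmult_right' algebra_simps)

lemma set_integral_wrap_product:
  assumes N: "1 \<le> N"
  shows "(LINT s:{0..1}|lborel. wrap N b1 s * wrap N b2 s * wrap N b3 s) = triple_sum N b1 b2 b3 / real N"
proof -
  define v where "v t = wrap N b1 t * wrap N b2 t * f (real N * (b3 + t))" for t
  have v_integrable: "integrable lborel v"
  proof (rule integrable_continuous_bounded_support[where C="\<bar>b3\<bar> + R"])
    show "continuous_on UNIV v"
      unfolding v_def by (intro continuous_intros continuous_on_wrap[OF N])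
    show "v t = 0" if "\<bar>b3\<bar> + R < \<bar>t\<bar>" for t
      using scaled_support[OF N, of "b3 + t"] that unfolding v_def by simp
  qed
  have "(LINT s:{0..1}|lborel. wrap N b1 s * wrap N b2 s * wrap N b3 s)
      = (LINT s:{0..1}|lborel. \<Sum>\<^sub>\<infinity>k::int. v (s + of_int k))"
    unfolding v_def wrap_product_eq_infsum ..
  also have "\<dots> = (LINT t|lborel. v t)"
    by (rule set_integral_periodization[OF v_integrable, where C="\<bar>b3\<bar> + R"])
       (use scaled_support[OF N] in \<open>simp add: v_def\<close>)
  also have "\<dots> = triple_sum N b1 b2 b3 / real N"
    unfolding v_def by (rule integral_wrap_wrap_scaled[OF N])
  finally show ?thesis .
qed

lemma M3_eq_sum_triple_sum:
  assumes N: "1 \<le> N"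
  shows "M3 y f N = (\<Sum>n1\<in>{1..N}. \<Sum>n2\<in>{1..N}. \<Sum>n3\<in>{1..N}. triple_sum N (y n1) (y n2) (y n3)) / real N"
proof -
  have "set_integrable lborel {0..1} (\<lambda>s. wrap N b1 s * wrap N b2 s * wrap N b3 s)" for b1 b2 b3
    unfolding set_integrable_def
    by (rule borel_integrable_compact) (auto intro!: continuous_intros continuous_on_subset[OF continuous_on_wrap[OF N]])
  then show ?thesis
    unfolding M3_def S_N_eq_sum_wrap
    by (simp add: set_integral_power3_sum set_integral_wrap_product[OF N] sum_divide_distrib)
qed

text \<open>Once \<open>N > 2R\<close>, a lattice sum with a repeated index vanishes off a single line of
  \<open>(k1, k2)\<close>: elsewhere one of \<open>z1, z2, z1 + z2\<close> is \<open>N\<close> times a nonzero integer.\<close>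

lemma int_eq_0_if_scaled_small:
  assumes "2 * R < real N" "\<bar>real N * of_int j\<bar> \<le> 2 * R"
  shows "j = 0"
  using le_abs_mult_of_int_nonzero[of "real N" j] assms by force

definition pair_kernel :: "real \<Rightarrow> real" where
  "pair_kernel z = triple_F f z 0"

definition pair_sum :: "nat \<Rightarrow> real \<Rightarrow> real \<Rightarrow> real" where
  "pair_sum N b1 b2 = (\<Sum>\<^sub>\<infinity>k::int. pair_kernel (real N * (b1 - b2 + of_int k)))"

lemma triple_F_zero_left: "triple_F f 0 z = pair_kernel (- z)"
proof -
  have "pair_kernel (- z)
      = \<bar>1\<bar> *\<^sub>R (LINT s|lborel. f (z + 1 * s) * f (- z + 0 + (z + 1 * s)) * f (0 + (z + 1 * s)))"
    unfolding pair_kernel_def triple_F_def by (rule lborel_integral_real_affine) simp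
  then show ?thesis
    unfolding triple_F_def by (simp add: mult_ac)
qed

lemma triple_F_antidiagonal: "triple_F f z (- z) = pair_kernel (- z)"
  unfolding pair_kernel_def triple_F_def by (simp add: mult_ac)

lemma pair_sum_swap:
  "(\<Sum>\<^sub>\<infinity>k::int. pair_kernel (- (real N * (b1 - b2 + of_int k)))) = pair_sum N b2 b1"
proof -
  have "pair_sum N b2 b1 = (\<Sum>\<^sub>\<infinity>k::int. pair_kernel (real N * (b2 - b1 + of_int (- k))))"
    unfolding pair_sum_def by (rule infsum_reindex_bij_betw[symmetric]) (rule bij_betwI[where g=uminus], auto)
  then show ?thesis
    by (simp add: algebra_simps)
qed

lemma triple_sum_diagonal:
  assumes N: "2 * R < real N"
  shows "triple_sum N b b b = Eint (\<lambda>x. f x ^ 3)"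
proof -
  have "triple_sum N b b b = (\<Sum>\<^sub>\<infinity>(k1::int, k2::int)\<in>{(0, 0)}.
      triple_F f (real N * of_int k1) (real N * of_int k2))"
    unfolding triple_sum_def
  proof (rule infsum_cong_neutral)
    fix k :: "int \<times> int"
    assume "k \<in> UNIV - {(0, 0)}"
    then show "(case k of (k1, k2) \<Rightarrow> triple_F f (real N * (b - b + of_int k1)) (real N * (b - b + of_int k2))) = 0"
      using triple_F_nonzero_imp int_eq_0_if_scaled_small[OF N] by (cases k) fastforce
  qed auto
  also have "\<dots> = Eint (\<lambda>x. f x ^ 3)"
    unfolding triple_F_def Eint_def by (simp add: power3_eq_cube)
  finally show ?thesis .
qed

lemma triple_sum_eq_left:
  assumes N: "2 * R < real N"
  shows "triple_sum N b b c = pair_sum N c b"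
proof -
  have "triple_sum N b b c = (\<Sum>\<^sub>\<infinity>j::int. triple_F f 0 (real N * (b - c + of_int j)))"
    unfolding triple_sum_def
  proof (subst infsum_reindex_range[where e="\<lambda>j. (0, j)"])
    fix k :: "int \<times> int"
    assume "k \<notin> range (\<lambda>j. (0, j))"
    then show "(case k of (k1, k2) \<Rightarrow> triple_F f (real N * (b - b + of_int k1)) (real N * (b - c + of_int k2))) = 0"
      using triple_F_nonzero_imp int_eq_0_if_scaled_small[OF N] by (cases k) fastforce
  qed (auto simp: inj_def)
  also have "\<dots> = pair_sum N c b"
    unfolding triple_F_zero_left pair_sum_swap ..
  finally show ?thesis .
qed

lemma triple_sum_eq_right:
  assumes N: "2 * R < real N"
  shows "triple_sum N c b b = pair_sum N c b"
proof -
  have "triple_sum N c b b = (\<Sum>\<^sub>\<infinity>j::int. triple_F f (real N * (c - b + of_int j)) 0)"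
    unfolding triple_sum_def
  proof (subst infsum_reindex_range[where e="\<lambda>j. (j, 0)"])
    fix k :: "int \<times> int"
    assume "k \<notin> range (\<lambda>j. (j, 0))"
    then show "(case k of (k1, k2) \<Rightarrow> triple_F f (real N * (c - b + of_int k1)) (real N * (b - b + of_int k2))) = 0"
      using triple_F_nonzero_imp int_eq_0_if_scaled_small[OF N] by (cases k) fastforce
  qed (auto simp: inj_def)
  also have "\<dots> = pair_sum N c b"
    unfolding pair_sum_def pair_kernel_def ..
  finally show ?thesis .
qed

lemma triple_sum_eq_outer:
  assumes N: "2 * R < real N"
  shows "triple_sum N c b c = pair_sum N b c"
proof -
  have "triple_sum N c b c
      = (\<Sum>\<^sub>\<infinity>j::int. triple_F f (real N * (c - b + of_int j)) (- (real N * (c - b + of_int j))))"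
    unfolding triple_sum_def
  proof (subst infsum_reindex_range[where e="\<lambda>j. (j, - j)"])
    fix k :: "int \<times> int"
    assume k: "k \<notin> range (\<lambda>j. (j, - j))"
    obtain j1 j2 where kj: "k = (j1, j2)"
      by force
    have "real N * (c - b + of_int j1) + real N * (b - c + of_int j2) = real N * of_int (j1 + j2)"
      by (simp add: algebra_simps)
    moreover have "j1 + j2 \<noteq> 0"
      using k kj by (auto simp: image_iff)
    ultimately show "(case k of (k1, k2) \<Rightarrow> triple_F f (real N * (c - b + of_int k1)) (real N * (b - c + of_int k2))) = 0"
      using triple_F_nonzero_imp int_eq_0_if_scaled_small[OF N] kj by fastforce
  qed (auto simp: inj_def algebra_simps)
  also have "\<dots> = pair_sum N b c"
    unfolding triple_F_antidiagonal pair_sum_swap ..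
  finally show ?thesis .
qed

lemma M3_decomposition:
  assumes "1 \<le> N" "2 * R < real N"
  shows "M3 y f N = triple_corr y f N + 3 * pair_corr y pair_kernel N + Eint (\<lambda>x. f x ^ 3)"
proof -
  have "(\<Sum>n1\<in>{1..N}. \<Sum>n2\<in>{1..N}. \<Sum>n3\<in>{1..N}. triple_sum N (y n1) (y n2) (y n3))
      = (\<Sum>(n1, n2, n3)\<in>distinct_triples N. triple_sum N (y n1) (y n2) (y n3))
        + 3 * (\<Sum>n1\<in>{1..N}. \<Sum>n2\<in>{1..N} - {n1}. pair_sum N (y n1) (y n2))
        + of_nat (card {1..N}) * Eint (\<lambda>x. f x ^ 3)"
    unfolding distinct_triples_def
    by (rule sum_cube_split_coincidences)
       (simp_all add: assms triple_sum_diagonal triple_sum_eq_left triple_sum_eq_right triple_sum_eq_outer)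
  then show ?thesis
    using assms(1)
    unfolding M3_eq_sum_triple_sum[OF assms(1)] triple_corr_def pair_corr_def pair_sum_def triple_sum_def
    by (simp add: field_simps)
qed

lemma eventually_M3_decomposition:
  "eventually (\<lambda>N. M3 y f N = triple_corr y f N + (3 * pair_corr y pair_kernel N + Eint (\<lambda>x. f x ^ 3)))
     sequentially"
proof -
  obtain N0 :: nat where "2 * R < real N0"
    using reals_Archimedean2 by blast
  then show ?thesis
    unfolding eventually_sequentially by (intro exI[of _ "N0 + 1"]) (auto simp: M3_decomposition)
qed

lemma pair_kernel_eq_integral_shift: "pair_kernel = (\<lambda>z. LINT s|lborel. f s ^ 2 * f (z + s))"
  unfolding pair_kernel_def triple_F_def by (simp add: power2_eq_square mult_ac)

lemma smooth_cc_pair_kernel: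
  assumes smooth: "\<And>k x. ((deriv ^^ k) f) differentiable (at x)"
  shows "smooth_cc pair_kernel"
  unfolding smooth_cc_def
proof
  have "continuous_on UNIV (\<lambda>s. f s ^ 2)"
    by (intro continuous_intros)
  moreover have "f s ^ 2 = 0" if "R < \<bar>s\<bar>" for s
    using support[OF that] by simp
  ultimately show "\<forall>k x. ((deriv ^^ k) pair_kernel) differentiable (at x)"
    unfolding pair_kernel_eq_integral_shift using higher_deriv_integral_shift(2) smooth by blast
  have "{z. pair_kernel z \<noteq> 0} \<subseteq> {-2 * R..2 * R}"
  proof
    fix z
    assume "z \<in> {z. pair_kernel z \<noteq> 0}"
    then have "\<bar>z\<bar> \<le> 2 * R"
      using triple_F_nonzero_imp unfolding pair_kernel_def by blast
    then show "z \<in> {-2 * R..2 * R}"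
      by (simp add: abs_le_iff)
  qed
  then have "closure {z. pair_kernel z \<noteq> 0} \<subseteq> {-2 * R..2 * R}"
    by (rule closure_minimal) simp
  then show "compact (closure {z. pair_kernel z \<noteq> 0})"
    unfolding compact_eq_bounded_closed using bounded_subset[OF compact_imp_bounded[OF compact_Icc]]
    by auto
qed

lemma Eint_pair_kernel: "Eint pair_kernel = Eint f * Eint (\<lambda>x. f x ^ 2)"
proof -
  have "Eint pair_kernel = Eint (\<lambda>x. f x ^ 2) * Eint f"
    unfolding Eint_def pair_kernel_eq_integral_shift
    by (rule integral_integral_shift_product[OF _ _ continuous support])
       (auto intro!: continuous_intros simp: support)
  then show ?thesis
    by simp
qed

end
lemma smooth_cc_compactly_supported:
  assumes "smooth_cc f"
  obtains R where "compactly_supported f R"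
proof -
  have "continuous_on UNIV f"
    using assms unfolding smooth_cc_def
    by (metis continuous_at_imp_continuous_on differentiable_imp_continuous_within funpow_0)
  moreover obtain R where R: "\<And>x. f x \<noteq> 0 \<Longrightarrow> \<bar>x\<bar> \<le> R"
    using assms compact_imp_bounded[of "closure {x. f x \<noteq> 0}"] closure_subset
    unfolding smooth_cc_def bounded_iff by (metis (mono_tags, lifting) mem_Collect_eq real_norm_def subsetD)
  ultimately have "compactly_supported f R"
  proof unfold_locales
    fix x
    assume "R < \<bar>x\<bar>"
    with R show "f x = 0"
      by force
  qed
  then show ?thesis
    by (rule that)
qed

theorem mainTheorem2:
  fixes y :: "nat \<Rightarrow> real" and f :: "real \<Rightarrow> real"
  assumes ypos: "\<And>n. n \<ge> 1 \<Longrightarrow> y n > 0"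
    and ppc: "\<And>g. smooth_cc g \<Longrightarrow> (\<lambda>N. pair_corr y g N) \<longlonglongrightarrow> Eint g"
    and f: "smooth_cc f"
  shows "((\<lambda>N. triple_corr y f N) \<longlonglongrightarrow> (Eint f) ^ 3) \<longleftrightarrow>
         ((\<lambda>N. M3 y f N) \<longlonglongrightarrow>
            (Eint f) ^ 3 + 3 * Eint f * Eint (\<lambda>x. f x ^ 2) + Eint (\<lambda>x. f x ^ 3))"
proof -
  obtain R where "compactly_supported f R"
    using smooth_cc_compactly_supported[OF f] .
  then interpret compactly_supported f R .
  let ?E3 = "Eint (\<lambda>x. f x ^ 3)"
  have "(\<lambda>N. pair_corr y pair_kernel N) \<longlonglongrightarrow> Eint f * Eint (\<lambda>x. f x ^ 2)"
    using ppc[OF smooth_cc_pair_kernel] f unfolding Eint_pair_kernel smooth_cc_def by blast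
  then have pair_limit: "(\<lambda>N. 3 * pair_corr y pair_kernel N + ?E3)
      \<longlonglongrightarrow> 3 * (Eint f * Eint (\<lambda>x. f x ^ 2)) + ?E3"
    by (intro tendsto_intros)
  have "(M3 y f \<longlonglongrightarrow> (Eint f) ^ 3 + (3 * (Eint f * Eint (\<lambda>x. f x ^ 2)) + ?E3))
      \<longleftrightarrow> ((\<lambda>N. triple_corr y f N + (3 * pair_corr y pair_kernel N + ?E3))
            \<longlonglongrightarrow> (Eint f) ^ 3 + (3 * (Eint f * Eint (\<lambda>x. f x ^ 2)) + ?E3))"
    by (rule tendsto_cong[OF eventually_M3_decomposition])
  also have "\<dots> \<longleftrightarrow> (triple_corr y f \<longlonglongrightarrow> (Eint f) ^ 3)"
    by (rule tendsto_add_convergent_iff[OF pair_limit])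
  finally show ?thesis
    by (simp add: algebra_simps)
qed

end
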